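(* Let $\mathcal{C}$ be the set of all finite fields $\mathbb{F}_p$ with $p$ prime, viewed as structures in the language $\{0,1,+\}$. For every non-empty finite subset $\mathcal{C}_0\subseteq\mathcal{C}$ there is a positive existential $\{0,1,+\}$-formula $\varphi(x)$ such that for every $\mathbb{F}_p\in\mathcal{C}_0$ and $x\in\mathbb{F}_p$, $\mathbb{F}_p\models\varphi(x)$ iff $x$ is a square in $\mathbb{F}_p$. However, for no infinite subset $\mathcal{C}_1\subseteq \mathcal{C}$ is there a positive existential $\{0,1,+\}$-formula defining "$x$ is a square" simultaneously in all $\mathbb{F}_p\in\mathcal{C}_1$. In particular, there is no positive existential $\{0,1,+\}$-formula $\mu(x,y,w)$ defining the relation $w=xy$ simultaneously in all $\mathbb{F}_p\in\mathcal{C}$. *)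

theory Defs
  imports "HOL-Computational_Algebra.Primes"
begin

datatype tm = Var nat | Zero | One | Add tm tm

datatype pefm = TrueF | FalseF | Eq tm tm | Conj pefm pefm | Disj pefm pefm | Ex nat pefm

text \<open>The field F_p is represented with carrier {0..<p} and arithmetic mod p.\<close>
fun tval :: "nat \<Rightarrow> (nat \<Rightarrow> nat) \<Rightarrow> tm \<Rightarrow> nat" where
  "tval p e (Var i) = e i"
| "tval p e Zero = 0"
| "tval p e One = 1 mod p"
| "tval p e (Add s t) = (tval p e s + tval p e t) mod p"

fun sat :: "nat \<Rightarrow> (nat \<Rightarrow> nat) \<Rightarrow> pefm \<Rightarrow> bool" where
  "sat p e TrueF = True"
| "sat p e FalseF = False"
| "sat p e (Eq s t) = (tval p e s = tval p e t)"
| "sat p e (Conj a b) = (sat p e a \<and> sat p e b)"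
| "sat p e (Disj a b) = (sat p e a \<or> sat p e b)"
| "sat p e (Ex i a) = (\<exists>v<p. sat p (e(i := v)) a)"

fun tvars :: "tm \<Rightarrow> nat set" where
  "tvars (Var i) = {i}"
| "tvars Zero = {}"
| "tvars One = {}"
| "tvars (Add s t) = tvars s \<union> tvars t"

fun fv :: "pefm \<Rightarrow> nat set" where
  "fv TrueF = {}"
| "fv FalseF = {}"
| "fv (Eq s t) = tvars s \<union> tvars t"
| "fv (Conj a b) = fv a \<union> fv b"
| "fv (Disj a b) = fv a \<union> fv b"
| "fv (Ex i a) = fv a - {i}"

definition defines_in :: "nat \<Rightarrow> nat \<Rightarrow> pefm \<Rightarrow> (nat list \<Rightarrow> bool) \<Rightarrow> bool" where
  "defines_in p k \<phi> R \<longleftrightarrow> fv \<phi> \<subseteq> {0..<k} \<and>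
     (\<forall>e. (\<forall>i. e i < p) \<longrightarrow> (sat p e \<phi> \<longleftrightarrow> R (map e [0..<k])))"

definition is_square_mod :: "nat \<Rightarrow> nat \<Rightarrow> bool" where
  "is_square_mod p x \<longleftrightarrow> (\<exists>y<p. (y * y) mod p = x)"

definition square_rel :: "nat \<Rightarrow> nat list \<Rightarrow> bool" where
  "square_rel p xs = is_square_mod p (xs ! 0)"

definition mult_rel :: "nat \<Rightarrow> nat list \<Rightarrow> bool" where
  "mult_rel p xs \<longleftrightarrow> xs ! 2 = (xs ! 0 * xs ! 1) mod p"

end

theory Submission
  imports Defs "HOL-Number_Theory.Cong" "HOL-Library.Infinite_Set"
begin

text \<open>Over \<open>\<int>/p\<close>, solution sets of a positive existential \<open>{0,1,+}\<close>-formula are, up to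
  disjunction, closed under affine combinations: a term equation is an affine condition, and
  intersection and projection preserve affine closedness. Distributing disjunctions, a formula
  \<open>\<phi>\<close> therefore defines a union of at most \<open>pieces \<phi>\<close> affine sets, a bound independent of
  \<open>p\<close>. For prime \<open>p\<close> an affine subset of \<open>\<bbbF>\<^sub>p\<close> with two points is all of \<open>\<bbbF>\<^sub>p\<close>, so a proper
  definable subset of \<open>\<bbbF>\<^sub>p\<close> has at most \<open>pieces \<phi>\<close> elements. For \<open>p > 2\<close> the squares form a
  proper subset, but they contain the \<open>K + 1\<close> distinct values \<open>0\<^sup>2, \<dots>, K\<^sup>2\<close> as soon as
  \<open>K\<^sup>2 < p\<close>; hence no single formula defines them for infinitely many \<open>p\<close>. For finitely many
  primes \<open>q\<close>, the guard \<open>q = 0\<close> selects the field \<open>\<bbbF>\<^sub>q\<close>, whose squares are then listed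
  explicitly.\<close>

section \<open>Affine combinations modulo \<open>p\<close>\<close>

definition valuation :: "nat \<Rightarrow> (nat \<Rightarrow> nat) \<Rightarrow> bool" where
  "valuation p e \<longleftrightarrow> (\<forall>i. e i < p)"

text \<open>The affine combination \<open>l a + (1 - l) b\<close> in \<open>\<int>/p\<close>; writing \<open>1 - l\<close> as \<open>p + 1 - l\<close>
  avoids truncated subtraction for \<open>l \<le> p\<close>.\<close>
definition aff_comb :: "nat \<Rightarrow> nat \<Rightarrow> nat \<Rightarrow> nat \<Rightarrow> nat" where
  "aff_comb p l a b = (l * a + (p + 1 - l) * b) mod p"

definition aff_comb_val :: "nat \<Rightarrow> nat \<Rightarrow> (nat \<Rightarrow> nat) \<Rightarrow> (nat \<Rightarrow> nat) \<Rightarrow> nat \<Rightarrow> nat" where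
  "aff_comb_val p l e1 e2 = (\<lambda>i. aff_comb p l (e1 i) (e2 i))"

lemma aff_comb_less: "0 < p \<Longrightarrow> aff_comb p l a b < p"
  by (simp add: aff_comb_def)

lemma valuation_aff_comb_val: "0 < p \<Longrightarrow> valuation p (aff_comb_val p l e1 e2)"
  by (simp add: valuation_def aff_comb_val_def aff_comb_less)

lemma mod_lincomb_add:
  "((l * a1 + m * a2) mod p + (l * b1 + m * b2) mod p) mod p
     = (l * ((a1 + b1) mod p) + m * ((a2 + b2) mod p)) mod (p::nat)"
proof -
  have "((l * a1 + m * a2) mod p + (l * b1 + m * b2) mod p) mod p
      = (l * (a1 + b1) + m * (a2 + b2)) mod p"
    by (simp add: mod_add_eq algebra_simps)
  also have "\<dots> = (l * ((a1 + b1) mod p) + m * ((a2 + b2) mod p)) mod p"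
    by (intro mod_add_cong) (simp_all add: mod_mult_right_eq)
  finally show ?thesis .
qed

lemma tval_aff_comb_val:
  assumes "l \<le> p"
  shows "tval p (aff_comb_val p l e1 e2) t = aff_comb p l (tval p e1 t) (tval p e2 t)"
proof (induction t)
  case One
  have "l + (p + 1 - l) = p + 1"
    using assms by simp
  then show ?case
    by (simp add: aff_comb_def mod_simps flip: distrib_right)
qed (simp_all add: aff_comb_val_def aff_comb_def mod_lincomb_add)

lemma aff_comb_cong:
  assumes "l \<le> p"
  shows "[int (aff_comb p l a b) = int l * (int a - int b) + int b] (mod int p)"
proof -
  have "int (l * a + (p + 1 - l) * b) = int l * int a + int (p + 1 - l) * int b"
    by simp
  also have "\<dots> = int l * (int a - int b) + int b + int p * int b"
    using assms by (simp add: of_nat_diff algebra_simps)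
  finally show ?thesis
    unfolding aff_comb_def cong_def by (simp add: zmod_int)
qed

section \<open>Affine subsets of a prime field\<close>

definition affine_set :: "nat \<Rightarrow> nat set \<Rightarrow> bool" where
  "affine_set p A \<longleftrightarrow> A \<subseteq> {..<p} \<and> (\<forall>a\<in>A. \<forall>b\<in>A. \<forall>l<p. aff_comb p l a b \<in> A)"

lemma inj_on_aff_comb:
  assumes "prime p" "a < p" "b < p" "a \<noteq> b"
  shows "inj_on (\<lambda>l. aff_comb p l a b) {..<p}"
proof (rule inj_onI)
  fix l1 l2 assume l: "l1 \<in> {..<p}" "l2 \<in> {..<p}"
    and eq: "aff_comb p l1 a b = aff_comb p l2 a b"
  have "[int l1 * (int a - int b) + int b = int l2 * (int a - int b) + int b] (mod int p)"
    using aff_comb_cong[of l1 p a b] aff_comb_cong[of l2 p a b] eq l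
    by (metis cong_sym cong_trans less_imp_le lessThan_iff)
  then have "[int l1 * (int a - int b) = int l2 * (int a - int b)] (mod int p)"
    by (simp add: cong_add_rcancel)
  moreover have "\<not> int p dvd int a - int b"
    using assms(2-4) dvd_imp_le_int[of "int a - int b" "int p"] by auto
  then have "coprime (int a - int b) (int p)"
    using assms(1) by (simp add: prime_imp_coprime coprime_commute)
  ultimately have "[int l1 = int l2] (mod int p)"
    by (simp add: cong_mult_rcancel)
  then show "l1 = l2"
    using l by (simp add: cong_int_iff cong_less_imp_eq_nat)
qed

lemma affine_set_two_points_eq_UNIV:
  assumes "prime p" "affine_set p A" "a \<in> A" "b \<in> A" "a \<noteq> b"
  shows "A = {..<p}"
proof -
  let ?f = "\<lambda>l. aff_comb p l a b"
  have A: "A \<subseteq> {..<p}" and line: "?f ` {..<p} \<subseteq> A"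
    using assms(2-4) by (auto simp: affine_set_def)
  have "inj_on ?f {..<p}"
    using assms A by (intro inj_on_aff_comb) auto
  then have "card (?f ` {..<p}) = p"
    by (simp add: card_image)
  then have "?f ` {..<p} = {..<p}"
    using line A by (intro card_subset_eq) auto
  then show ?thesis
    using line A by auto
qed

lemma card_Union_affine_sets_le:
  assumes "prime p" "\<forall>A\<in>set As. affine_set p A" "\<Union>(set As) \<noteq> {..<p}"
  shows "card (\<Union>(set As)) \<le> length As"
proof -
  have "card A \<le> 1" if "A \<in> set As" for A
  proof (rule ccontr)
    assume "\<not> card A \<le> 1"
    moreover have "finite A"
      using that assms(2) finite_subset by (auto simp: affine_set_def)
    ultimately obtain a b where "a \<in> A" "b \<in> A" "a \<noteq> b"
      by (metis One_nat_def card_le_Suc0_iff_eq)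
    then have "A = {..<p}"
      using affine_set_two_points_eq_UNIV assms that by blast
    then show False
      using assms(2,3) that by (auto simp: affine_set_def)
  qed
  then have "card (\<Union>(set As)) \<le> (\<Sum>A\<in>set As. 1)"
    using card_UN_le[of "set As" id] sum_mono[of "set As" card "\<lambda>_. 1"] by simp
  also have "\<dots> \<le> length As"
    by (simp add: card_length)
  finally show ?thesis .
qed

section \<open>Sets defined by positive existential formulas\<close>

definition affine_valset :: "nat \<Rightarrow> (nat \<Rightarrow> nat) set \<Rightarrow> bool" where
  "affine_valset p T \<longleftrightarrow> T \<subseteq> Collect (valuation p) \<and>
     (\<forall>e1\<in>T. \<forall>e2\<in>T. \<forall>l<p. aff_comb_val p l e1 e2 \<in> T)"

definition ex_proj :: "nat \<Rightarrow> nat \<Rightarrow> (nat \<Rightarrow> nat) set \<Rightarrow> (nat \<Rightarrow> nat) set" where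
  "ex_proj p i A = {e. valuation p e \<and> (\<exists>v<p. e(i := v) \<in> A)}"

definition affine_map2 :: "nat \<Rightarrow> (nat \<Rightarrow> nat \<Rightarrow> nat \<Rightarrow> nat) \<Rightarrow> bool" where
  "affine_map2 p g \<longleftrightarrow> (\<forall>y<p. \<forall>w<p. valuation p (g y w)) \<and>
     (\<forall>l y1 w1 y2 w2. aff_comb_val p l (g y1 w1) (g y2 w2)
                       = g (aff_comb p l y1 y2) (aff_comb p l w1 w2))"

fun pieces :: "pefm \<Rightarrow> nat" where
  "pieces TrueF = 1"
| "pieces FalseF = 0"
| "pieces (Eq s t) = 1"
| "pieces (Conj a b) = pieces a * pieces b"
| "pieces (Disj a b) = pieces a + pieces b"
| "pieces (Ex i a) = pieces a"

lemma affine_valset_Int: "affine_valset p A \<Longrightarrow> affine_valset p B \<Longrightarrow> affine_valset p (A \<inter> B)"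
  by (auto simp: affine_valset_def)

lemma affine_valset_solutions:
  assumes "0 < p"
  shows "affine_valset p {e. valuation p e \<and> tval p e s = tval p e t}"
  using assms by (auto simp: affine_valset_def valuation_aff_comb_val tval_aff_comb_val)

lemma affine_valset_project:
  assumes "0 < p" "affine_valset p A"
  shows "affine_valset p (ex_proj p i A)"
  unfolding affine_valset_def ex_proj_def
proof (intro conjI ballI allI impI)
  fix e1 e2 l
  assume "e1 \<in> {e. valuation p e \<and> (\<exists>v<p. e(i := v) \<in> A)}"
    and "e2 \<in> {e. valuation p e \<and> (\<exists>v<p. e(i := v) \<in> A)}" and "l < p"
  then obtain v1 v2 where "v1 < p" "e1(i := v1) \<in> A" "v2 < p" "e2(i := v2) \<in> A"
    by blast
  with \<open>l < p\<close> assms(2) have "aff_comb_val p l (e1(i := v1)) (e2(i := v2)) \<in> A"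
    by (auto simp: affine_valset_def)
  moreover have "aff_comb_val p l (e1(i := v1)) (e2(i := v2))
      = (aff_comb_val p l e1 e2)(i := aff_comb p l v1 v2)"
    by (auto simp: aff_comb_val_def)
  ultimately show "aff_comb_val p l e1 e2 \<in> {e. valuation p e \<and> (\<exists>v<p. e(i := v) \<in> A)}"
    using assms(1)
    by (auto simp: valuation_aff_comb_val aff_comb_less intro!: exI[of _ "aff_comb p l v1 v2"])
qed auto

lemma sat_set_affine_decomposition:
  assumes "0 < p"
  shows "\<exists>Ts. length Ts \<le> pieces \<phi> \<and> (\<forall>T\<in>set Ts. affine_valset p T) \<and>
           {e. valuation p e \<and> sat p e \<phi>} = \<Union>(set Ts)"
proof (induction \<phi>)
  case TrueF
  have "affine_valset p (Collect (valuation p))"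
    using assms by (auto simp: affine_valset_def valuation_aff_comb_val)
  then show ?case
    by (intro exI[of _ "[Collect (valuation p)]"]) auto
next
  case FalseF
  show ?case
    by (intro exI[of _ "[]"]) auto
next
  case (Eq s t)
  show ?case
    using affine_valset_solutions[OF assms, of s t]
    by (intro exI[of _ "[{e. valuation p e \<and> tval p e s = tval p e t}]"]) auto
next
  case (Conj a b)
  then obtain Ta Tb
    where Ta: "length Ta \<le> pieces a" "\<forall>T\<in>set Ta. affine_valset p T"
      "{e. valuation p e \<and> sat p e a} = \<Union>(set Ta)"
    and Tb: "length Tb \<le> pieces b" "\<forall>T\<in>set Tb. affine_valset p T"
      "{e. valuation p e \<and> sat p e b} = \<Union>(set Tb)"
    by blast
  have "{e. valuation p e \<and> sat p e (Conj a b)}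
      = {e. valuation p e \<and> sat p e a} \<inter> {e. valuation p e \<and> sat p e b}"
    by auto
  also have "\<dots> = (\<Union>(A, B)\<in>set (List.product Ta Tb). A \<inter> B)"
    unfolding Ta(3) Tb(3) by auto
  finally show ?case
    using Ta Tb
    by (intro exI[of _ "map (\<lambda>(A, B). A \<inter> B) (List.product Ta Tb)"])
      (auto simp: mult_le_mono affine_valset_Int)
next
  case (Disj a b)
  then obtain Ta Tb
    where "length Ta \<le> pieces a" "\<forall>T\<in>set Ta. affine_valset p T"
      "{e. valuation p e \<and> sat p e a} = \<Union>(set Ta)"
    and "length Tb \<le> pieces b" "\<forall>T\<in>set Tb. affine_valset p T"
      "{e. valuation p e \<and> sat p e b} = \<Union>(set Tb)"
    by blast
  then show ?case
    by (intro exI[of _ "Ta @ Tb"]) auto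
next
  case (Ex i a)
  then obtain Ta where "length Ta \<le> pieces a" "\<forall>T\<in>set Ta. affine_valset p T"
      and Ta: "{e. valuation p e \<and> sat p e a} = \<Union>(set Ta)"
    by blast
  moreover have "{e. valuation p e \<and> sat p e (Ex i a)} = ex_proj p i {e. valuation p e \<and> sat p e a}"
    by (auto simp: ex_proj_def valuation_def)
  ultimately show ?case
    using affine_valset_project[OF assms]
    by (intro exI[of _ "map (ex_proj p i) Ta"]) (auto simp: ex_proj_def)
qed

lemma affine_set_preimage:
  assumes "affine_map2 p g" "affine_valset p T"
  shows "affine_set p {w. w < p \<and> (\<exists>y<p. g y w \<in> T)}"
  unfolding affine_set_def
proof (intro conjI ballI allI impI)
  fix a b l
  assume "a \<in> {w. w < p \<and> (\<exists>y<p. g y w \<in> T)}" "b \<in> {w. w < p \<and> (\<exists>y<p. g y w \<in> T)}"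
    and "l < p"
  then obtain y1 y2 where "y1 < p" "g y1 a \<in> T" "y2 < p" "g y2 b \<in> T"
    by blast
  with \<open>l < p\<close> assms have "g (aff_comb p l y1 y2) (aff_comb p l a b) \<in> T"
    by (metis affine_map2_def affine_valset_def)
  then show "aff_comb p l a b \<in> {w. w < p \<and> (\<exists>y<p. g y w \<in> T)}"
    using \<open>l < p\<close> by (auto simp: aff_comb_less intro!: exI[of _ "aff_comb p l y1 y2"])
qed auto

lemma card_definable_proper_subset_le:
  assumes "prime p" "affine_map2 p g"
    and proper: "{w. w < p \<and> (\<exists>y<p. sat p (g y w) \<phi>)} \<noteq> {..<p}"
  shows "card {w. w < p \<and> (\<exists>y<p. sat p (g y w) \<phi>)} \<le> pieces \<phi>"
proof -
  obtain Ts where Ts: "length Ts \<le> pieces \<phi>" "\<forall>T\<in>set Ts. affine_valset p T"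
      "{e. valuation p e \<and> sat p e \<phi>} = \<Union>(set Ts)"
    using sat_set_affine_decomposition[OF prime_gt_0_nat[OF assms(1)]] by blast
  let ?pre = "\<lambda>T. {w. w < p \<and> (\<exists>y<p. g y w \<in> T)}"
  have "{w. w < p \<and> (\<exists>y<p. sat p (g y w) \<phi>)}
      = {w. w < p \<and> (\<exists>y<p. g y w \<in> {e. valuation p e \<and> sat p e \<phi>})}"
    using assms(2) by (auto simp: affine_map2_def)
  also have "\<dots> = \<Union>(set (map ?pre Ts))"
    unfolding Ts(3) by auto
  finally have "card {w. w < p \<and> (\<exists>y<p. sat p (g y w) \<phi>)} \<le> length (map ?pre Ts)"
    using card_Union_affine_sets_le[OF assms(1), of "map ?pre Ts"] proper
      affine_set_preimage[OF assms(2)] Ts(2) by auto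
  then show ?thesis
    using Ts(1) by simp
qed

section \<open>Squares modulo \<open>p\<close>\<close>

lemma card_squares_mod_gt:
  assumes "K * K < p"
  shows "K < card {w. w < p \<and> is_square_mod p w}"
proof -
  have "strict_mono (\<lambda>y::nat. y * y)"
    by (intro strict_monoI) (simp add: mult_strict_mono)
  then have "card ((\<lambda>y. y * y) ` {..K}) = K + 1"
    by (simp add: card_image strict_mono_imp_inj_on)
  moreover have "(\<lambda>y. y * y) ` {..K} \<subseteq> {w. w < p \<and> is_square_mod p w}"
  proof clarify
    fix y assume "y \<le> K"
    then have "y * y < p"
      using assms mult_le_mono order.strict_trans1 by blast
    moreover have "y < p"
      using \<open>y * y < p\<close> le_square order.strict_trans1 by blast
    ultimately show "y * y < p \<and> is_square_mod p (y * y)"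
      by (auto simp: is_square_mod_def)
  qed
  then have "card ((\<lambda>y. y * y) ` {..K}) \<le> card {w. w < p \<and> is_square_mod p w}"
    by (rule card_mono[rotated]) simp
  ultimately show ?thesis
    by simp
qed

lemma exists_nonsquare_mod:
  assumes "2 < p"
  shows "\<exists>w<p. \<not> is_square_mod p w"
proof (rule ccontr)
  let ?sq = "\<lambda>y. y * y mod p"
  obtain k where "p = Suc (Suc (Suc k))"
    using assms less_iff_Suc_add by auto
  then have "(p - 1) * (p - 1) = 1 + (p - 2) * p"
    by (simp add: algebra_simps)
  then have "?sq (p - 1) = (1 + (p - 2) * p) mod p"
    by simp
  also have "\<dots> = ?sq 1"
    by (simp only: mod_mult_self1 mult_1)
  finally have collision: "?sq (p - 1) = ?sq 1" .
  assume "\<not> ?thesis"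
  then have "?sq ` {..<p} = {..<p}"
    by (auto simp: is_square_mod_def)
  then have "inj_on ?sq {..<p}"
    using eq_card_imp_inj_on[OF finite_lessThan, of ?sq p] by simp
  then have "p - 1 = 1"
    using inj_onD[of ?sq "{..<p}" "p - 1" 1] collision assms by auto
  then show False
    using assms by simp
qed

lemma squares_not_definable:
  assumes "prime p" "2 < p" "pieces \<phi> * pieces \<phi> < p" "affine_map2 p g"
  shows "\<not> (\<forall>w<p. (\<exists>y<p. sat p (g y w) \<phi>) \<longleftrightarrow> is_square_mod p w)"
proof
  assume hyp: "\<forall>w<p. (\<exists>y<p. sat p (g y w) \<phi>) \<longleftrightarrow> is_square_mod p w"
  then have eq: "{w. w < p \<and> (\<exists>y<p. sat p (g y w) \<phi>)} = {w. w < p \<and> is_square_mod p w}"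
    by auto
  have proper: "{w. w < p \<and> is_square_mod p w} \<noteq> {..<p}"
    using exists_nonsquare_mod[OF assms(2)] by auto
  have "card {w. w < p \<and> is_square_mod p w} \<le> pieces \<phi>"
    using card_definable_proper_subset_le[OF assms(1,4) proper[folded eq]] by (simp only: eq)
  then show False
    using card_squares_mod_gt[OF assms(3)] by linarith
qed

section \<open>Uniform definability of squares and multiplication\<close>

fun tm_of_nat :: "nat \<Rightarrow> tm" where
  "tm_of_nat 0 = Zero"
| "tm_of_nat (Suc n) = Add (tm_of_nat n) One"

lemma tval_tm_of_nat: "tval p e (tm_of_nat n) = n mod p"
  by (induction n) (simp_all add: mod_simps)

lemma tvars_tm_of_nat: "tvars (tm_of_nat n) = {}"
  by (induction n) auto

fun Disjs :: "pefm list \<Rightarrow> pefm" where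
  "Disjs [] = FalseF"
| "Disjs (\<phi> # \<phi>s) = Disj \<phi> (Disjs \<phi>s)"

lemma sat_Disjs: "sat p e (Disjs \<phi>s) \<longleftrightarrow> (\<exists>\<phi>\<in>set \<phi>s. sat p e \<phi>)"
  by (induction \<phi>s) auto

lemma fv_Disjs: "fv (Disjs \<phi>s) = (\<Union>\<phi>\<in>set \<phi>s. fv \<phi>)"
  by (induction \<phi>s) auto

definition square_formula :: "nat set \<Rightarrow> pefm" where
  "square_formula C = Disjs (map (\<lambda>q. Conj (Eq (tm_of_nat q) Zero)
      (Disjs (map (\<lambda>y. Eq (tm_of_nat (y * y)) (Var 0)) [0..<q]))) (sorted_list_of_set C))"

lemma square_formula_defines_squares:
  assumes "finite C" "C \<subseteq> {p. prime p}" "p \<in> C"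
  shows "defines_in p 1 (square_formula C) (square_rel p)"
proof -
  have guard: "q mod p = 0 \<longleftrightarrow> q = p" if "q \<in> C" for q
    using assms that primes_dvd_imp_eq[of p q] by (auto simp flip: dvd_eq_mod_eq_0)
  have "sat p e (square_formula C) \<longleftrightarrow> (\<exists>q\<in>C. q mod p = 0 \<and> (\<exists>y\<in>{..<q}. y * y mod p = e 0))"
    for e
    using assms(1) by (simp add: square_formula_def sat_Disjs tval_tm_of_nat atLeast0LessThan)
  then have "sat p e (square_formula C) \<longleftrightarrow> is_square_mod p (e 0)" for e
    using guard assms(3) by (auto simp: is_square_mod_def)
  moreover have "fv (square_formula C) \<subseteq> {0..<1}"
    by (auto simp: square_formula_def fv_Disjs tvars_tm_of_nat)
  ultimately show ?thesis
    by (simp add: defines_in_def square_rel_def)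
qed

lemma squares_not_uniformly_definable:
  assumes "infinite C" "C \<subseteq> {p. prime p}"
  shows "\<not> (\<forall>p\<in>C. defines_in p 1 \<phi> (square_rel p))"
proof
  assume hyp: "\<forall>p\<in>C. defines_in p 1 \<phi> (square_rel p)"
  obtain p where p: "p \<in> C" "pieces \<phi> * pieces \<phi> + 2 < p"
    using assms(1) by (meson infinite_nat_iff_unbounded)
  let ?g = "\<lambda>y w. (\<lambda>_. 0)(0 := w)"
  have "affine_map2 p ?g"
    using p by (auto simp: affine_map2_def valuation_def aff_comb_val_def aff_comb_def)
  moreover have "\<forall>w<p. (\<exists>y<p. sat p (?g y w) \<phi>) \<longleftrightarrow> is_square_mod p w"
    using hyp p by (auto simp: defines_in_def square_rel_def)
  ultimately show False
    using squares_not_definable[of p \<phi> ?g] p assms(2) by auto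
qed

text \<open>Multiplication would define the squares via \<open>\<exists>y. \<mu>(y, y, w)\<close>.\<close>
lemma mult_not_uniformly_definable:
  "\<not> (\<forall>p::nat. prime p \<longrightarrow> defines_in p 3 \<mu> (mult_rel p))"
proof
  assume hyp: "\<forall>p::nat. prime p \<longrightarrow> defines_in p 3 \<mu> (mult_rel p)"
  obtain p :: nat where p: "prime p" "pieces \<mu> * pieces \<mu> + 2 < p"
    using primes_infinite by (metis infinite_nat_iff_unbounded mem_Collect_eq)
  let ?g = "\<lambda>y w. (\<lambda>_. 0)(0 := y, 1 := y, 2 := w)"
  have "affine_map2 p ?g"
    using p by (auto simp: affine_map2_def valuation_def aff_comb_val_def aff_comb_def)
  moreover have "sat p (?g y w) \<mu> \<longleftrightarrow> w = y * y mod p" if "y < p" "w < p" for y w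
  proof -
    have "map (?g y w) [0..<3] = [y, y, w]"
      by (simp add: upt_rec)
    then show ?thesis
      using hyp p that by (auto simp: defines_in_def mult_rel_def)
  qed
  then have "\<forall>w<p. (\<exists>y<p. sat p (?g y w) \<mu>) \<longleftrightarrow> is_square_mod p w"
    by (auto simp: is_square_mod_def)
  ultimately show False
    using squares_not_definable[of p \<mu> ?g] p by auto
qed

theorem proposition1p5:
  shows "(\<forall>C0. finite C0 \<and> C0 \<noteq> {} \<and> C0 \<subseteq> {p::nat. prime p} \<longrightarrow>
            (\<exists>\<phi>. \<forall>p\<in>C0. defines_in p 1 \<phi> (square_rel p)))
       \<and> (\<forall>C1. infinite C1 \<and> C1 \<subseteq> {p::nat. prime p} \<longrightarrow>
            \<not> (\<exists>\<phi>. \<forall>p\<in>C1. defines_in p 1 \<phi> (square_rel p)))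
       \<and> \<not> (\<exists>\<mu>. \<forall>p::nat. prime p \<longrightarrow> defines_in p 3 \<mu> (mult_rel p))"
  using square_formula_defines_squares squares_not_uniformly_definable
    mult_not_uniformly_definable
  by blast

end
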